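(* Let $x\in\{\text{complete},\text{preferred},\text{semi-stable},\text{stage},\text{stage2},\text{CF2},\text{grounded},\text{ideal},\text{eager}\}$. For every two argumentation frameworks $AF=(AR,Attacks)$ and $AF'=(AR',Attacks')$ such that $AF\preceq_{RM}AF'$: $$\forall E\in\sigma_x(AF)\ \exists E'\in\sigma_x(AF') \text{ such that } (E'\not\subseteq AR\ \lor\ E'=E).$$
   Context: An argumentation framework is a pair $AF=(AR,Attacks)$ with $AR$ finite and $Attacks\subseteq AR\times AR$; $a$ attacks $b$ iff $(a,b)\in Attacks$; $S$ attacks $b$ iff some element of $S$ attacks $b$. $AF\preceq_N AF'$ (normal expansion) iff $AR\subseteq AR'$, $Attacks\subseteq Attacks'$ and no $(a,b)\in Attacks'\setminus Attacks$ has $a,b\in AR$. Attack sequence: $\langle a_1,\dots,a_n\rangle$ of pairwise distinct arguments with $(a_i,a_{i+1})\in Attacks$; $b$ is reachable from $a$ iff such a sequence has $a_1=a,a_n=b$. An attack cycle is a sequence $\langle a_1,\dots,a_n\rangle$ with $(a_i,a_{i+1})\in Attacks$ for $1\le i\le n-1$, $a_1=a_n$, and $a_1,\dots,a_{n-1}$ pairwise distinct; $\mathcal C(AF)$ is the set of attack cycles of $AF$. $AF\preceq_{RM}AF'$ (rational man's expansion) iff (1) $AF\preceq_N AF'$; (2) $\mathcal C(AF')=\mathcal C(AF)$; (3) for all $a\in AR$ and $b\in AR'\setminus AR$ such that $b$ is reachable from $a$ in $AF'$, $a$ occurs in no attack cycle of $AF'$. Semantics: $S$ is conflict-free iff no element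 of $S$ attacks an element of $S$; $a$ is acceptable w.r.t. $S$ iff every attacker of $a$ is attacked by $S$; a conflict-free $S$ is admissible iff all its elements are acceptable w.r.t. $S$; $S^+=\{b:\text{some }a\in S\text{ attacks }b\}$. Among admissible sets: complete = contains every argument acceptable w.r.t. it; preferred = $\subseteq$-maximal admissible; grounded = $\subseteq$-minimal complete; ideal = $\subseteq$-maximal admissible set contained in every preferred extension; semi-stable = complete with $\subseteq$-maximal $S\cup S^+$ among complete extensions; eager = $\subseteq$-maximal admissible set contained in every semi-stable extension. Naive = $\subseteq$-maximal conflict-free; stage = conflict-free $S$ with no conflict-free $S'$ such that $S'\cup S'^+\supsetneq S\cup S^+$. SCCs: maximal sets of mutually reachable arguments ($SCCS_{AF}$); $AF\downarrow_S=(S,Attacks\cap(S\times S))$; for SCC $S$ and $E\subseteq AR$: $S^-_{out}=\{a\notin S: a\text{ attacks some element of }S\}$, $D_{AF}(S,E)=\{a\in S: E\cap S^-_{out}\text{ attacks }a\}$, $UP_{AF}(S,E)=S\setminus D_{AF}(S,E)$. CF2 (resp. stage2): $E$ is an extension of $AF$ iff either $|SCCS_{AF}|=1$ and $E$ is naive (resp. stage), or for every $S\in SCCS_{AF}$, $E\cap S$ is a CF2 (resp. stage2) extension of $AF\downarrow_{UP_{AF}(S,E)}$. $\sigma_x(AF)$ is the set of all $x$-extensions of $AF$. *)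

theory Defs
  imports Main
begin

definition wf_AF :: "'a set \<Rightarrow> ('a \<times> 'a) set \<Rightarrow> bool" where
  "wf_AF AR Att \<longleftrightarrow> finite AR \<and> Att \<subseteq> AR \<times> AR"

definition normal_expansion ::
  "'a set \<Rightarrow> ('a \<times> 'a) set \<Rightarrow> 'a set \<Rightarrow> ('a \<times> 'a) set \<Rightarrow> bool" where
  "normal_expansion AR Att AR' Att' \<longleftrightarrow>
     AR \<subseteq> AR' \<and> Att \<subseteq> Att' \<and> (\<forall>(a,b) \<in> Att' - Att. \<not> (a \<in> AR \<and> b \<in> AR))"

definition attack_seq :: "('a \<times> 'a) set \<Rightarrow> 'a list \<Rightarrow> bool" where
  "attack_seq Att xs \<longleftrightarrow> xs \<noteq> [] \<and> distinct xs \<and>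
     (\<forall>i. Suc i < length xs \<longrightarrow> (xs ! i, xs ! Suc i) \<in> Att)"

definition reachable :: "('a \<times> 'a) set \<Rightarrow> 'a \<Rightarrow> 'a \<Rightarrow> bool" where
  "reachable Att a b \<longleftrightarrow> (\<exists>xs. attack_seq Att xs \<and> hd xs = a \<and> last xs = b)"

definition attack_cycle :: "('a \<times> 'a) set \<Rightarrow> 'a list \<Rightarrow> bool" where
  "attack_cycle Att xs \<longleftrightarrow> length xs \<ge> 2 \<and> hd xs = last xs \<and> distinct (butlast xs) \<and>
     (\<forall>i. Suc i < length xs \<longrightarrow> (xs ! i, xs ! Suc i) \<in> Att)"

definition cycles :: "('a \<times> 'a) set \<Rightarrow> 'a list set" where
  "cycles Att = {xs. attack_cycle Att xs}"

definition rm_expansion ::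
  "'a set \<Rightarrow> ('a \<times> 'a) set \<Rightarrow> 'a set \<Rightarrow> ('a \<times> 'a) set \<Rightarrow> bool" where
  "rm_expansion AR Att AR' Att' \<longleftrightarrow>
     normal_expansion AR Att AR' Att' \<and>
     cycles Att' = cycles Att \<and>
     (\<forall>a \<in> AR. \<forall>b \<in> AR' - AR. reachable Att' a b \<longrightarrow>
        (\<forall>xs \<in> cycles Att'. a \<notin> set xs))"

definition conflict_free :: "('a \<times> 'a) set \<Rightarrow> 'a set \<Rightarrow> bool" where
  "conflict_free Att S \<longleftrightarrow> (\<forall>a \<in> S. \<forall>b \<in> S. (a, b) \<notin> Att)"

definition acceptable :: "('a \<times> 'a) set \<Rightarrow> 'a \<Rightarrow> 'a set \<Rightarrow> bool" where
  "acceptable Att a S \<longleftrightarrow> (\<forall>b. (b, a) \<in> Att \<longrightarrow> (\<exists>c \<in> S. (c, b) \<in> Att))"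

definition plus :: "('a \<times> 'a) set \<Rightarrow> 'a set \<Rightarrow> 'a set" where
  "plus Att S = {b. \<exists>a \<in> S. (a, b) \<in> Att}"

definition admissible :: "'a set \<Rightarrow> ('a \<times> 'a) set \<Rightarrow> 'a set \<Rightarrow> bool" where
  "admissible AR Att S \<longleftrightarrow> S \<subseteq> AR \<and> conflict_free Att S \<and> (\<forall>a \<in> S. acceptable Att a S)"

definition complete_ext :: "'a set \<Rightarrow> ('a \<times> 'a) set \<Rightarrow> 'a set \<Rightarrow> bool" where
  "complete_ext AR Att S \<longleftrightarrow> admissible AR Att S \<and> (\<forall>a \<in> AR. acceptable Att a S \<longrightarrow> a \<in> S)"

definition preferred_ext :: "'a set \<Rightarrow> ('a \<times> 'a) set \<Rightarrow> 'a set \<Rightarrow> bool" where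
  "preferred_ext AR Att S \<longleftrightarrow> admissible AR Att S \<and>
     (\<forall>T. admissible AR Att T \<and> S \<subseteq> T \<longrightarrow> T = S)"

definition grounded_ext :: "'a set \<Rightarrow> ('a \<times> 'a) set \<Rightarrow> 'a set \<Rightarrow> bool" where
  "grounded_ext AR Att S \<longleftrightarrow> complete_ext AR Att S \<and>
     (\<forall>T. complete_ext AR Att T \<and> T \<subseteq> S \<longrightarrow> T = S)"

definition ideal_ext :: "'a set \<Rightarrow> ('a \<times> 'a) set \<Rightarrow> 'a set \<Rightarrow> bool" where
  "ideal_ext AR Att S \<longleftrightarrow>
     admissible AR Att S \<and> (\<forall>P. preferred_ext AR Att P \<longrightarrow> S \<subseteq> P) \<and>
     (\<forall>T. admissible AR Att T \<and> (\<forall>P. preferred_ext AR Att P \<longrightarrow> T \<subseteq> P) \<and> S \<subseteq> T \<longrightarrow> T = S)"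

definition semi_stable_ext :: "'a set \<Rightarrow> ('a \<times> 'a) set \<Rightarrow> 'a set \<Rightarrow> bool" where
  "semi_stable_ext AR Att S \<longleftrightarrow> complete_ext AR Att S \<and>
     (\<forall>T. complete_ext AR Att T \<longrightarrow> \<not> (S \<union> plus Att S \<subset> T \<union> plus Att T))"

definition eager_ext :: "'a set \<Rightarrow> ('a \<times> 'a) set \<Rightarrow> 'a set \<Rightarrow> bool" where
  "eager_ext AR Att S \<longleftrightarrow>
     admissible AR Att S \<and> (\<forall>P. semi_stable_ext AR Att P \<longrightarrow> S \<subseteq> P) \<and>
     (\<forall>T. admissible AR Att T \<and> (\<forall>P. semi_stable_ext AR Att P \<longrightarrow> T \<subseteq> P) \<and> S \<subseteq> T \<longrightarrow> T = S)"

definition naive_ext :: "'a set \<Rightarrow> ('a \<times> 'a) set \<Rightarrow> 'a set \<Rightarrow> bool" where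
  "naive_ext AR Att S \<longleftrightarrow> S \<subseteq> AR \<and> conflict_free Att S \<and>
     (\<forall>T. T \<subseteq> AR \<and> conflict_free Att T \<and> S \<subseteq> T \<longrightarrow> T = S)"

definition stage_ext :: "'a set \<Rightarrow> ('a \<times> 'a) set \<Rightarrow> 'a set \<Rightarrow> bool" where
  "stage_ext AR Att S \<longleftrightarrow> S \<subseteq> AR \<and> conflict_free Att S \<and>
     \<not> (\<exists>T. T \<subseteq> AR \<and> conflict_free Att T \<and> S \<union> plus Att S \<subset> T \<union> plus Att T)"

definition mutually_reachable :: "('a \<times> 'a) set \<Rightarrow> 'a \<Rightarrow> 'a \<Rightarrow> bool" where
  "mutually_reachable Att a b \<longleftrightarrow> reachable Att a b \<and> reachable Att b a"

definition SCCS :: "'a set \<Rightarrow> ('a \<times> 'a) set \<Rightarrow> 'a set set" where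
  "SCCS AR Att = {S. S \<subseteq> AR \<and> S \<noteq> {} \<and> (\<forall>a \<in> S. \<forall>b \<in> S. mutually_reachable Att a b) \<and>
     (\<forall>T. T \<subseteq> AR \<and> S \<subseteq> T \<and> (\<forall>a \<in> T. \<forall>b \<in> T. mutually_reachable Att a b) \<longrightarrow> T = S)}"

definition restr :: "('a \<times> 'a) set \<Rightarrow> 'a set \<Rightarrow> ('a \<times> 'a) set" where
  "restr Att S = Att \<inter> (S \<times> S)"

definition S_out_minus :: "'a set \<Rightarrow> ('a \<times> 'a) set \<Rightarrow> 'a set \<Rightarrow> 'a set" where
  "S_out_minus AR Att S = {a \<in> AR. a \<notin> S \<and> (\<exists>b \<in> S. (a, b) \<in> Att)}"

definition D_set :: "'a set \<Rightarrow> ('a \<times> 'a) set \<Rightarrow> 'a set \<Rightarrow> 'a set \<Rightarrow> 'a set" where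
  "D_set AR Att S E = {a \<in> S. \<exists>e \<in> E \<inter> S_out_minus AR Att S. (e, a) \<in> Att}"

definition UP_set :: "'a set \<Rightarrow> ('a \<times> 'a) set \<Rightarrow> 'a set \<Rightarrow> 'a set \<Rightarrow> 'a set" where
  "UP_set AR Att S E = S - D_set AR Att S E"

text \<open>Recursion is made well-founded by a fuel argument:
when there is more than one SCC, each SCC is a proper subset of AR, so the
recursion depth is bounded by card AR and fuel Suc (card AR) never runs out
(the 0-fuel clause is never reached for finite AR).\<close>
fun scc_rec :: "('a set \<Rightarrow> ('a \<times> 'a) set \<Rightarrow> 'a set \<Rightarrow> bool) \<Rightarrow> nat \<Rightarrow>
    'a set \<Rightarrow> ('a \<times> 'a) set \<Rightarrow> 'a set \<Rightarrow> bool" where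
  "scc_rec base 0 AR Att E = False"
| "scc_rec base (Suc n) AR Att E =
     (E \<subseteq> AR \<and>
      (if card (SCCS AR Att) = 1 then base AR Att E
       else (\<forall>S \<in> SCCS AR Att.
               scc_rec base n (UP_set AR Att S E) (restr Att (UP_set AR Att S E)) (E \<inter> S))))"

definition cf2_ext :: "'a set \<Rightarrow> ('a \<times> 'a) set \<Rightarrow> 'a set \<Rightarrow> bool" where
  "cf2_ext AR Att E \<longleftrightarrow> scc_rec naive_ext (Suc (card AR)) AR Att E"

definition stage2_ext :: "'a set \<Rightarrow> ('a \<times> 'a) set \<Rightarrow> 'a set \<Rightarrow> bool" where
  "stage2_ext AR Att E \<longleftrightarrow> scc_rec stage_ext (Suc (card AR)) AR Att E"

datatype semantics = Complete | Preferred | SemiStable | Stage | Stage2 | CF2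
  | Grounded | Ideal | Eager

fun ext_pred :: "semantics \<Rightarrow> 'a set \<Rightarrow> ('a \<times> 'a) set \<Rightarrow> 'a set \<Rightarrow> bool" where
  "ext_pred Complete = complete_ext"
| "ext_pred Preferred = preferred_ext"
| "ext_pred SemiStable = semi_stable_ext"
| "ext_pred Stage = stage_ext"
| "ext_pred Stage2 = stage2_ext"
| "ext_pred CF2 = cf2_ext"
| "ext_pred Grounded = grounded_ext"
| "ext_pred Ideal = ideal_ext"
| "ext_pred Eager = eager_ext"

definition sigma :: "semantics \<Rightarrow> 'a set \<Rightarrow> ('a \<times> 'a) set \<Rightarrow> 'a set set" where
  "sigma x AR Att = {E. ext_pred x AR Att E}"

end

theory Submission
  imports Defs "HOL-Library.Transitive_Closure_Table"
begin

(* Call upstream the arguments of AF' from which some new argument can be reached. The set is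
   closed under attackers, and since a rational man's expansion creates no cycles and keeps old
   arguments that reach new ones off all cycles, the attack relation is well-founded on it. There
   every complete, CF2 and stage2 extension is forced: an argument belongs to it iff none of its
   attackers does. So either every such extension of AF' contains a new argument, or none does.
   In the second case every complete extension attacks all new arguments; AF and AF' then have the
   same complete extensions and hence the same preferred, grounded, semi-stable, ideal and eager
   ones, and a CF2 or stage2 extension of AF remains one of AF', the new arguments being singleton
   SCCs that it defeats. A stage extension of AF that is not one of AF' is strictly range-dominated
   by a stage extension of AF', and the latter cannot lie inside AR, since it would then agree with
   the former on the old upstream arguments and have the same range in AF'. *)

section \<open>Attack paths and cycles\<close>

lemma all_nat_split: "(\<forall>i. P i) \<longleftrightarrow> P 0 \<and> (\<forall>i. P (Suc i))"
  by (metis not0_implies_Suc)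

lemma rtrancl_path_iff_chain:
  "rtrancl_path r x ys y \<longleftrightarrow>
     last (x # ys) = y \<and> (\<forall>i. Suc i < length (x # ys) \<longrightarrow> r ((x # ys) ! i) ((x # ys) ! Suc i))"
proof (induction ys arbitrary: x)
  case Nil
  show ?case by (auto elim: rtrancl_path.cases intro: rtrancl_path.base)
next
  case (Cons z zs)
  have "rtrancl_path r x (z # zs) y \<longleftrightarrow> r x z \<and> rtrancl_path r z zs y"
    by (auto elim: rtrancl_path.cases intro: rtrancl_path.step)
  also have "\<dots> \<longleftrightarrow> r x z \<and> last (z # zs) = y \<and>
      (\<forall>i. Suc i < length (z # zs) \<longrightarrow> r ((z # zs) ! i) ((z # zs) ! Suc i))"
    using Cons.IH by simp
  also have "\<dots> \<longleftrightarrow> last (x # z # zs) = y \<and>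
      (\<forall>i. Suc i < length (x # z # zs) \<longrightarrow> r ((x # z # zs) ! i) ((x # z # zs) ! Suc i))"
    by (subst (2) all_nat_split) auto
  finally show ?case .
qed

lemma rtrancl_iff_rtrancl_path: "(a, b) \<in> r\<^sup>* \<longleftrightarrow> (\<exists>ys. rtrancl_path (\<lambda>x y. (x, y) \<in> r) a ys b)"
  by (simp add: rtrancl_def rtranclp_eq_rtrancl_path)

lemma reachable_iff_rtrancl: "reachable Att a b \<longleftrightarrow> (a, b) \<in> Att\<^sup>*"
proof
  assume "reachable Att a b"
  then obtain ys where "attack_seq Att (a # ys)" "last (a # ys) = b"
    unfolding reachable_def attack_seq_def by (metis list.collapse)
  then have "rtrancl_path (\<lambda>x y. (x, y) \<in> Att) a ys b"
    unfolding rtrancl_path_iff_chain attack_seq_def by blast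
  then show "(a, b) \<in> Att\<^sup>*"
    unfolding rtrancl_iff_rtrancl_path by blast
next
  assume "(a, b) \<in> Att\<^sup>*"
  then obtain ys where "rtrancl_path (\<lambda>x y. (x, y) \<in> Att) a ys b"
    unfolding rtrancl_iff_rtrancl_path by blast
  then obtain ys where "rtrancl_path (\<lambda>x y. (x, y) \<in> Att) a ys b" "distinct (a # ys)"
    by (rule rtrancl_path_distinct)
  then have "attack_seq Att (a # ys) \<and> hd (a # ys) = a \<and> last (a # ys) = b"
    unfolding attack_seq_def rtrancl_path_iff_chain by simp
  then show "reachable Att a b"
    unfolding reachable_def by blast
qed

lemma trancl_imp_attack_cycle:
  assumes "(a, a) \<in> Att\<^sup>+"
  obtains xs where "attack_cycle Att xs" "a \<in> set xs"
proof -
  obtain c where "(a, c) \<in> Att" "(c, a) \<in> Att\<^sup>*"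
    using assms by (meson tranclD)
  then obtain ys where "rtrancl_path (\<lambda>x y. (x, y) \<in> Att) c ys a"
    unfolding rtrancl_iff_rtrancl_path by blast
  then obtain ys where path: "rtrancl_path (\<lambda>x y. (x, y) \<in> Att) c ys a" "distinct (c # ys)"
    by (rule rtrancl_path_distinct)
  have last: "last (c # ys) = a"
    and chain: "\<forall>i. Suc i < length (c # ys) \<longrightarrow> ((c # ys) ! i, (c # ys) ! Suc i) \<in> Att"
    using path(1) unfolding rtrancl_path_iff_chain by simp_all
  have "distinct (butlast (c # ys) @ [a])"
    using path(2) last by (metis append_butlast_last_id list.distinct(1))
  then have "distinct (butlast (a # c # ys))" by simp
  moreover have "\<forall>i. Suc i < length (a # c # ys) \<longrightarrow> ((a # c # ys) ! i, (a # c # ys) ! Suc i) \<in> Att"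
    using chain \<open>(a, c) \<in> Att\<close> by (subst all_nat_split) simp
  ultimately have "attack_cycle Att (a # c # ys)"
    using last unfolding attack_cycle_def by simp
  then show thesis using that by simp
qed

lemma attack_cycle_subset_Domain:
  assumes "attack_cycle Att xs"
  shows "set xs \<subseteq> Domain Att"
proof
  fix y assume "y \<in> set xs"
  then obtain i where i: "i < length xs" "xs ! i = y" by (meson in_set_conv_nth)
  have chain: "\<And>i. Suc i < length xs \<Longrightarrow> (xs ! i, xs ! Suc i) \<in> Att"
    and len: "length xs \<ge> 2" and "hd xs = last xs"
    using assms unfolding attack_cycle_def by auto
  moreover have "xs \<noteq> []" using len by auto
  ultimately have "xs ! (length xs - 1) = xs ! 0"
    by (metis hd_conv_nth last_conv_nth)
  then have "Suc i < length xs \<or> y = xs ! 0"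
    using i by (metis Suc_lessI diff_Suc_1)
  then show "y \<in> Domain Att"
    using chain[of 0] chain[of i] i len by force
qed

section \<open>Well-founded attacker-closed sets\<close>

definition grounded_on :: "('a \<times> 'a) set \<Rightarrow> 'a set \<Rightarrow> 'a set \<Rightarrow> bool" where
  "grounded_on At V S \<longleftrightarrow> (\<forall>x\<in>V. x \<in> S \<longleftrightarrow> \<not> (\<exists>y\<in>S. (y, x) \<in> At))"

definition wf_attacker_closed :: "('a \<times> 'a) set \<Rightarrow> 'a set \<Rightarrow> bool" where
  "wf_attacker_closed At V \<longleftrightarrow> (\<forall>x\<in>V. \<forall>y. (y, x) \<in> At \<longrightarrow> y \<in> V) \<and> wf (Restr At V)"

lemma wf_attacker_closedI:
  assumes "finite At" and closed: "\<And>x y. x \<in> V \<Longrightarrow> (y, x) \<in> At \<Longrightarrow> y \<in> V"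
    and acyclic: "\<And>x. x \<in> V \<Longrightarrow> (x, x) \<notin> At\<^sup>+"
  shows "wf_attacker_closed At V"
proof -
  have "acyclic (Restr At V)"
  proof (rule acyclicI, intro allI notI)
    fix x assume x: "(x, x) \<in> (Restr At V)\<^sup>+"
    then have "x \<in> V" by (auto dest: tranclD)
    moreover have "(x, x) \<in> At\<^sup>+" using x trancl_mono by blast
    ultimately show False using acyclic by blast
  qed
  then have "wf (Restr At V)"
    using \<open>finite At\<close> by (blast intro: finite_acyclic_wf)
  then show ?thesis
    unfolding wf_attacker_closed_def using closed by blast
qed

lemma wf_attacker_closed_induct [consumes 2, case_names attackers]:
  assumes "wf_attacker_closed At V" "x \<in> V"
    and "\<And>x. x \<in> V \<Longrightarrow> (\<And>y. (y, x) \<in> At \<Longrightarrow> P y) \<Longrightarrow> P x"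
  shows "P x"
proof -
  have closed: "\<And>x y. x \<in> V \<Longrightarrow> (y, x) \<in> At \<Longrightarrow> y \<in> V" and "wf (Restr At V)"
    using assms(1) unfolding wf_attacker_closed_def by blast+
  from \<open>wf (Restr At V)\<close> have "x \<in> V \<longrightarrow> P x"
  proof (induction x rule: wf_induct_rule)
    case (less x)
    then show ?case using closed assms(3) by blast
  qed
  then show ?thesis using assms(2) by blast
qed

lemma grounded_on_unique:
  assumes "wf_attacker_closed At V" "grounded_on At V S" "grounded_on At V T" "x \<in> V"
  shows "x \<in> S \<longleftrightarrow> x \<in> T"
  using assms(1,4)
proof (induction rule: wf_attacker_closed_induct)
  case (attackers x)
  then show ?case using assms(2,3) unfolding grounded_on_def by blast
qed

lemma complete_ext_grounded_on:
  assumes V: "wf_attacker_closed At V" "V \<subseteq> A" and S: "complete_ext A At S"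
  shows "grounded_on At V S"
  unfolding grounded_on_def
proof
  fix x assume "x \<in> V"
  with V(1) show "x \<in> S \<longleftrightarrow> \<not> (\<exists>y\<in>S. (y, x) \<in> At)"
  proof (induction rule: wf_attacker_closed_induct)
    case (attackers x)
    have "x \<in> S" if unattacked: "\<not> (\<exists>y\<in>S. (y, x) \<in> At)"
    proof -
      have "acceptable At x S"
        using attackers unattacked unfolding acceptable_def by blast
      then show "x \<in> S" using S \<open>x \<in> V\<close> V(2) unfolding complete_ext_def by blast
    qed
    moreover have "conflict_free At S"
      using S unfolding complete_ext_def admissible_def by blast
    ultimately show ?case unfolding conflict_free_def by blast
  qed
qed

lemma conflict_free_eq_on_if_range_eq_on:
  assumes "wf_attacker_closed At V" "conflict_free At S" "conflict_free At T"
    and range: "\<forall>x\<in>V. x \<in> S \<union> plus At S \<longleftrightarrow> x \<in> T \<union> plus At T" and "x \<in> V"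
  shows "x \<in> S \<longleftrightarrow> x \<in> T"
  using assms(1,5)
proof (induction rule: wf_attacker_closed_induct)
  case (attackers x)
  have transfer: "x \<in> Y" if X: "conflict_free At X" "x \<in> X" and "x \<in> Y \<union> plus At Y"
    and agree: "\<And>y. (y, x) \<in> At \<Longrightarrow> y \<in> Y \<Longrightarrow> y \<in> X" for X Y
  proof (rule ccontr)
    assume "x \<notin> Y"
    then obtain y where "y \<in> Y" "(y, x) \<in> At"
      using \<open>x \<in> Y \<union> plus At Y\<close> unfolding plus_def by blast
    with X agree show False
      unfolding conflict_free_def by blast
  qed
  show ?case
  proof
    assume "x \<in> S"
    moreover have "x \<in> T \<union> plus At T"
      using range attackers(1) \<open>x \<in> S\<close> by blast
    ultimately show "x \<in> T"
      by (rule transfer[OF assms(2)]) (use attackers(2) in blast)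
  next
    assume "x \<in> T"
    moreover have "x \<in> S \<union> plus At S"
      using range attackers(1) \<open>x \<in> T\<close> by blast
    ultimately show "x \<in> S"
      by (rule transfer[OF assms(3)]) (use attackers(2) in blast)
  qed
qed

section \<open>Admissibility-based semantics\<close>

lemma finite_has_maximal_image:
  assumes "finite F" "T \<in> F"
  shows "\<exists>S\<in>F. f T \<subseteq> f S \<and> (\<forall>X\<in>F. \<not> f S \<subset> f X)"
proof -
  from finite_has_maximal2[of "f ` F" "f T", OF finite_imageI[OF assms(1)] imageI[OF assms(2)]]
  obtain m where "m \<in> f ` F" and m: "f T \<subseteq> m" "\<forall>Y \<in> f ` F. m \<subseteq> Y \<longrightarrow> m = Y"
    by (elim bexE conjE)
  from \<open>m \<in> f ` F\<close> obtain S where S: "S \<in> F" "m = f S"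
    by (rule imageE) simp
  have "\<not> f S \<subset> f X" if "X \<in> F" for X
    using m(2) S(2) imageI[OF that, of f] by blast
  with S m(1) show ?thesis by blast
qed

lemma finite_Collect_subsets: "finite A \<Longrightarrow> (\<And>S. P S \<Longrightarrow> S \<subseteq> A) \<Longrightarrow> finite (Collect P)"
  by (rule finite_subset[of _ "Pow A"]) auto

definition defended :: "'a set \<Rightarrow> ('a \<times> 'a) set \<Rightarrow> 'a set \<Rightarrow> 'a set" where
  "defended A At S = {a \<in> A. acceptable At a S}"

lemma acceptable_mono: "acceptable At a S \<Longrightarrow> S \<subseteq> T \<Longrightarrow> acceptable At a T"
  unfolding acceptable_def by blast

lemma defended_mono: "S \<subseteq> T \<Longrightarrow> defended A At S \<subseteq> defended A At T"
  unfolding defended_def by (auto elim: acceptable_mono)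

lemma admissible_subset_defended: "admissible A At S \<Longrightarrow> S \<subseteq> defended A At S"
  unfolding admissible_def defended_def by blast

lemma admissible_defended:
  assumes "admissible A At S"
  shows "admissible A At (defended A At S)"
proof -
  have cf: "conflict_free At S"
    using assms unfolding admissible_def by blast
  have "conflict_free At (defended A At S)"
    unfolding conflict_free_def
  proof (intro ballI notI)
    fix a b assume ab: "a \<in> defended A At S" "b \<in> defended A At S" "(a, b) \<in> At"
    then obtain c where c: "c \<in> S" "(c, a) \<in> At"
      unfolding defended_def acceptable_def by blast
    then obtain d where "d \<in> S" "(d, c) \<in> At"
      using ab(1) unfolding defended_def acceptable_def by blast
    with c(1) cf show False
      unfolding conflict_free_def by blast
  qed
  moreover have "acceptable At a (defended A At S)" if "a \<in> defended A At S" for a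
  proof -
    from that have "acceptable At a S" by (simp add: defended_def)
    then show ?thesis using admissible_subset_defended[OF assms] by (rule acceptable_mono)
  qed
  ultimately show ?thesis
    unfolding admissible_def defended_def by blast
qed

lemma admissible_empty: "admissible A At {}"
  unfolding admissible_def conflict_free_def by blast

lemma complete_ext_iff_defended:
  "complete_ext A At S \<longleftrightarrow> admissible A At S \<and> defended A At S \<subseteq> S"
  unfolding complete_ext_def defended_def by blast

lemma complete_ext_imp_admissible: "complete_ext A At S \<Longrightarrow> admissible A At S"
  unfolding complete_ext_def by blast

definition max_admissible :: "'a set \<Rightarrow> ('a \<times> 'a) set \<Rightarrow> ('a set \<Rightarrow> bool) \<Rightarrow> 'a set \<Rightarrow> bool" where
  "max_admissible A At P S \<longleftrightarrow> admissible A At S \<and> P S \<and>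
     (\<forall>T. admissible A At T \<and> P T \<and> S \<subseteq> T \<longrightarrow> T = S)"

definition max_complete :: "'a set \<Rightarrow> ('a \<times> 'a) set \<Rightarrow> ('a set \<Rightarrow> bool) \<Rightarrow> 'a set \<Rightarrow> bool" where
  "max_complete A At P S \<longleftrightarrow> complete_ext A At S \<and> P S \<and>
     (\<forall>T. complete_ext A At T \<and> P T \<and> S \<subseteq> T \<longrightarrow> T = S)"

lemma max_admissible_exists_above:
  assumes "finite A" "admissible A At T" "P T"
  obtains S where "max_admissible A At P S" "T \<subseteq> S"
proof -
  define C where "C = {S. admissible A At S \<and> P S}"
  have "finite C"
    unfolding C_def using \<open>finite A\<close> by (rule finite_Collect_subsets) (simp add: admissible_def)
  moreover have "T \<in> C"
    unfolding C_def using assms(2,3) by blast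
  ultimately obtain S where "S \<in> C" "T \<subseteq> S" "\<forall>X\<in>C. \<not> S \<subset> X"
    using finite_has_maximal_image[of C T id] by auto
  then show thesis
    using that unfolding max_admissible_def C_def by blast
qed

lemma max_admissible_exists: "finite A \<Longrightarrow> P {} \<Longrightarrow> \<exists>S. max_admissible A At P S"
  using max_admissible_exists_above[OF _ admissible_empty] by metis

lemma max_admissible_imp_complete_ext:
  assumes "max_admissible A At P S"
    and P_defended: "\<And>S. admissible A At S \<Longrightarrow> P S \<Longrightarrow> P (defended A At S)"
  shows "complete_ext A At S"
proof -
  have S: "admissible A At S" "P S"
    and maximal: "\<And>T. admissible A At T \<Longrightarrow> P T \<Longrightarrow> S \<subseteq> T \<Longrightarrow> T = S"
    using assms(1) unfolding max_admissible_def by blast+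
  have "defended A At S = S"
    using maximal[OF admissible_defended[OF S(1)] P_defended[OF S]
        admissible_subset_defended[OF S(1)]] .
  then show ?thesis
    using S(1) unfolding complete_ext_iff_defended by blast
qed

lemma max_admissible_iff_max_complete:
  assumes "finite A" and P_defended: "\<And>S. admissible A At S \<Longrightarrow> P S \<Longrightarrow> P (defended A At S)"
  shows "max_admissible A At P S \<longleftrightarrow> max_complete A At P S"
proof
  assume S: "max_admissible A At P S"
  have "T = S" if "complete_ext A At T" "P T" "S \<subseteq> T" for T
    using S complete_ext_imp_admissible[OF that(1)] that(2,3) unfolding max_admissible_def by blast
  moreover have "complete_ext A At S"
    using S P_defended by (rule max_admissible_imp_complete_ext)
  moreover have "P S"
    using S unfolding max_admissible_def by blast
  ultimately show "max_complete A At P S"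
    unfolding max_complete_def by blast
next
  assume S: "max_complete A At P S"
  have "T = S" if T: "admissible A At T" "P T" "S \<subseteq> T" for T
  proof -
    obtain M where M: "max_admissible A At P M" "T \<subseteq> M"
      using max_admissible_exists_above[where P = P, OF \<open>finite A\<close> T(1,2)] .
    have "complete_ext A At M"
      using M(1) P_defended by (rule max_admissible_imp_complete_ext)
    moreover have "P M"
      using M(1) unfolding max_admissible_def by blast
    ultimately have "M = S"
      using S M(2) T(3) unfolding max_complete_def by blast
    then show "T = S"
      using M(2) T(3) by blast
  qed
  moreover have "admissible A At S" "P S"
    using S unfolding max_complete_def complete_ext_def by blast+
  ultimately show "max_admissible A At P S"
    unfolding max_admissible_def by blast
qed

lemma defended_subset_Inter_complete:
  assumes "S \<subseteq> \<Inter>C" "C \<subseteq> Collect (complete_ext A At)"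
  shows "defended A At S \<subseteq> \<Inter>C"
proof (rule Inter_greatest)
  fix P assume "P \<in> C"
  then have "complete_ext A At P" "S \<subseteq> P"
    using assms by auto
  then have "defended A At S \<subseteq> defended A At P" "defended A At P \<subseteq> P"
    by (simp_all add: defended_mono complete_ext_iff_defended)
  then show "defended A At S \<subseteq> P" by blast
qed

lemma max_admissible_eq_max_complete:
  assumes "finite A" "C \<subseteq> Collect (complete_ext A At)"
  shows "max_admissible A At (\<lambda>S. S \<subseteq> \<Inter>C) = max_complete A At (\<lambda>S. S \<subseteq> \<Inter>C)"
proof (intro ext max_admissible_iff_max_complete[OF assms(1)])
  fix S assume "S \<subseteq> \<Inter>C"
  then show "defended A At S \<subseteq> \<Inter>C"
    using assms(2) by (rule defended_subset_Inter_complete)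
qed

lemma preferred_ext_eq: "preferred_ext A At = max_admissible A At (\<lambda>_. True)"
  by (intro ext) (simp add: preferred_ext_def max_admissible_def)

lemma ideal_ext_eq: "ideal_ext A At = max_admissible A At (\<lambda>S. S \<subseteq> \<Inter>{P. preferred_ext A At P})"
  by (intro ext) (simp add: ideal_ext_def max_admissible_def le_Inf_iff)

lemma eager_ext_eq: "eager_ext A At = max_admissible A At (\<lambda>S. S \<subseteq> \<Inter>{P. semi_stable_ext A At P})"
  by (intro ext) (simp add: eager_ext_def max_admissible_def le_Inf_iff)

lemma preferred_ext_imp_complete_ext: "preferred_ext A At S \<Longrightarrow> complete_ext A At S"
  unfolding preferred_ext_eq by (erule max_admissible_imp_complete_ext) simp

lemma semi_stable_ext_imp_complete_ext: "semi_stable_ext A At S \<Longrightarrow> complete_ext A At S"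
  unfolding semi_stable_ext_def by blast

lemma grounded_ext_imp_complete_ext: "grounded_ext A At S \<Longrightarrow> complete_ext A At S"
  unfolding grounded_ext_def by blast

lemma preferred_ext_eq_max_complete: "finite A \<Longrightarrow> preferred_ext A At = max_complete A At (\<lambda>_. True)"
  unfolding preferred_ext_eq by (intro ext max_admissible_iff_max_complete)

lemma ideal_ext_eq_max_complete:
  assumes "finite A"
  shows "ideal_ext A At = max_complete A At (\<lambda>S. S \<subseteq> \<Inter>{P. preferred_ext A At P})"
  unfolding ideal_ext_eq using assms
  by (rule max_admissible_eq_max_complete) (blast intro: preferred_ext_imp_complete_ext)

lemma eager_ext_eq_max_complete:
  assumes "finite A"
  shows "eager_ext A At = max_complete A At (\<lambda>S. S \<subseteq> \<Inter>{P. semi_stable_ext A At P})"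
  unfolding eager_ext_eq using assms
  by (rule max_admissible_eq_max_complete) (blast intro: semi_stable_ext_imp_complete_ext)

lemma ideal_ext_imp_complete_ext: "finite A \<Longrightarrow> ideal_ext A At S \<Longrightarrow> complete_ext A At S"
  by (simp add: ideal_ext_eq_max_complete max_complete_def)

lemma eager_ext_imp_complete_ext: "finite A \<Longrightarrow> eager_ext A At S \<Longrightarrow> complete_ext A At S"
  by (simp add: eager_ext_eq_max_complete max_complete_def)

lemma preferred_ext_exists: "finite A \<Longrightarrow> \<exists>S. preferred_ext A At S"
  unfolding preferred_ext_eq by (rule max_admissible_exists) simp_all

lemma ideal_ext_exists: "finite A \<Longrightarrow> \<exists>S. ideal_ext A At S"
  unfolding ideal_ext_eq by (rule max_admissible_exists) simp_all

lemma eager_ext_exists: "finite A \<Longrightarrow> \<exists>S. eager_ext A At S"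
  unfolding eager_ext_eq by (rule max_admissible_exists) simp_all

lemma complete_ext_exists: "finite A \<Longrightarrow> \<exists>S. complete_ext A At S"
  by (meson preferred_ext_exists preferred_ext_imp_complete_ext)

lemma finite_complete_exts: "finite A \<Longrightarrow> finite {S. complete_ext A At S}"
  by (rule finite_Collect_subsets) (auto simp: complete_ext_def admissible_def)

lemma grounded_ext_exists:
  assumes "finite A"
  shows "\<exists>S. grounded_ext A At S"
proof -
  obtain S0 where "complete_ext A At S0"
    using complete_ext_exists[OF assms] ..
  then have "{S. complete_ext A At S} \<noteq> {}" by blast
  then obtain S where "S \<in> {S. complete_ext A At S}"
    "\<forall>X \<in> {S. complete_ext A At S}. X \<subseteq> S \<longrightarrow> S = X"
    using finite_has_minimal[OF finite_complete_exts[OF assms]] by blast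
  then show ?thesis
    unfolding grounded_ext_def by blast
qed

lemma semi_stable_ext_exists:
  assumes "finite A"
  shows "\<exists>S. semi_stable_ext A At S"
proof -
  obtain S0 where "S0 \<in> {S. complete_ext A At S}"
    using complete_ext_exists[OF assms] by blast
  from finite_has_maximal_image[OF finite_complete_exts[OF assms] this, of "\<lambda>S. S \<union> plus At S"]
  obtain S where "S \<in> {S. complete_ext A At S}"
    and "S0 \<union> plus At S0 \<subseteq> S \<union> plus At S"
    and "\<forall>X \<in> {S. complete_ext A At S}. \<not> S \<union> plus At S \<subset> X \<union> plus At X"
    by (elim bexE conjE)
  then have "semi_stable_ext A At S"
    unfolding semi_stable_ext_def by simp
  then show ?thesis ..
qed

lemma naive_ext_exists:
  assumes "finite A"
  shows "\<exists>E\<subseteq>A. naive_ext A At E"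
proof -
  have "finite {T. T \<subseteq> A \<and> conflict_free At T}"
    using assms by (rule finite_Collect_subsets) blast
  moreover have "{} \<in> {T. T \<subseteq> A \<and> conflict_free At T}"
    unfolding conflict_free_def by blast
  ultimately obtain E where "E \<in> {T. T \<subseteq> A \<and> conflict_free At T}"
    "\<forall>X \<in> {T. T \<subseteq> A \<and> conflict_free At T}. \<not> E \<subset> X"
    using finite_has_maximal_image[of "{T. T \<subseteq> A \<and> conflict_free At T}" "{}" id] by auto
  then have "naive_ext A At E" "E \<subseteq> A"
    unfolding naive_ext_def by blast+
  then show ?thesis
    by blast
qed

lemma naive_ext_singleton: "naive_ext {x} {} E \<Longrightarrow> E = {x}"
  unfolding naive_ext_def conflict_free_def by blast

lemma stage_ext_exists_above:
  assumes "finite A" "T \<subseteq> A" "conflict_free At T"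
  shows "\<exists>S. stage_ext A At S \<and> T \<union> plus At T \<subseteq> S \<union> plus At S"
proof -
  have "finite {T. T \<subseteq> A \<and> conflict_free At T}"
    using assms(1) by (rule finite_Collect_subsets) blast
  moreover have "T \<in> {T. T \<subseteq> A \<and> conflict_free At T}"
    using assms(2,3) by blast
  ultimately obtain S where "S \<in> {T. T \<subseteq> A \<and> conflict_free At T}"
    and "T \<union> plus At T \<subseteq> S \<union> plus At S"
    and "\<forall>X \<in> {T. T \<subseteq> A \<and> conflict_free At T}. \<not> S \<union> plus At S \<subset> X \<union> plus At X"
    by (rule finite_has_maximal_image[THEN bexE]) (elim conjE)
  then have "stage_ext A At S"
    unfolding stage_ext_def by blast
  with \<open>T \<union> plus At T \<subseteq> S \<union> plus At S\<close> show ?thesis by blast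
qed

lemma stage_ext_singleton:
  assumes "stage_ext {x} {} E"
  shows "E = {x}"
proof (rule ccontr)
  assume "E \<noteq> {x}"
  then have "E = {}"
    using assms unfolding stage_ext_def by blast
  moreover have "conflict_free {} {x}"
    unfolding conflict_free_def by simp
  ultimately have "\<exists>T. T \<subseteq> {x} \<and> conflict_free {} T \<and> E \<union> plus {} E \<subset> T \<union> plus {} T"
    unfolding plus_def by blast
  then show False
    using assms unfolding stage_ext_def by blast
qed

lemma stage_ext_exists:
  assumes "finite A"
  shows "\<exists>E\<subseteq>A. stage_ext A At E"
proof -
  have "conflict_free At {}"
    unfolding conflict_free_def by blast
  then obtain E where "stage_ext A At E"
    using stage_ext_exists_above[OF assms empty_subsetI] by blast
  moreover from this have "E \<subseteq> A"
    unfolding stage_ext_def by blast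
  ultimately show ?thesis
    by blast
qed

section \<open>Strongly connected components and the SCC-recursive scheme\<close>

definition scc_of :: "'a set \<Rightarrow> ('a \<times> 'a) set \<Rightarrow> 'a \<Rightarrow> 'a set" where
  "scc_of A At a = {b \<in> A. (a, b) \<in> At\<^sup>* \<and> (b, a) \<in> At\<^sup>*}"

lemma SCCS_iff:
  "S \<in> SCCS A At \<longleftrightarrow> S \<subseteq> A \<and> S \<noteq> {} \<and> (\<forall>a\<in>S. \<forall>b\<in>S. (a, b) \<in> At\<^sup>*) \<and>
     (\<forall>T. T \<subseteq> A \<and> S \<subseteq> T \<and> (\<forall>a\<in>T. \<forall>b\<in>T. (a, b) \<in> At\<^sup>*) \<longrightarrow> T = S)"
proof -
  have "(\<forall>a\<in>T. \<forall>b\<in>T. (a, b) \<in> At\<^sup>* \<and> (b, a) \<in> At\<^sup>*) \<longleftrightarrow> (\<forall>a\<in>T. \<forall>b\<in>T. (a, b) \<in> At\<^sup>*)"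
    for T :: "'a set"
    by blast
  then show ?thesis
    unfolding SCCS_def mutually_reachable_def reachable_iff_rtrancl by simp
qed

lemma scc_of_self: "a \<in> A \<Longrightarrow> a \<in> scc_of A At a"
  unfolding scc_of_def by simp

lemma scc_of_in_SCCS:
  assumes "a \<in> A"
  shows "scc_of A At a \<in> SCCS A At"
proof -
  have "a \<in> scc_of A At a"
    using assms by (rule scc_of_self)
  moreover have "(x, y) \<in> At\<^sup>*" if "x \<in> scc_of A At a" "y \<in> scc_of A At a" for x y
    using that unfolding scc_of_def by (blast intro: rtrancl_trans)
  moreover have "T \<subseteq> scc_of A At a" if "T \<subseteq> A" "a \<in> T" "\<forall>x\<in>T. \<forall>y\<in>T. (x, y) \<in> At\<^sup>*" for T
    using that unfolding scc_of_def by blast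
  ultimately show ?thesis
    unfolding SCCS_iff scc_of_def by blast
qed

lemma SCCS_eq_scc_of:
  assumes "S \<in> SCCS A At" "a \<in> S"
  shows "S = scc_of A At a"
proof -
  have maximal: "\<And>T. T \<subseteq> A \<Longrightarrow> S \<subseteq> T \<Longrightarrow> \<forall>x\<in>T. \<forall>y\<in>T. (x, y) \<in> At\<^sup>* \<Longrightarrow> T = S"
    and "a \<in> A"
    using assms unfolding SCCS_iff by blast+
  have "S \<subseteq> scc_of A At a"
    using assms unfolding SCCS_iff scc_of_def by blast
  moreover have "scc_of A At a \<subseteq> A" "\<forall>x\<in>scc_of A At a. \<forall>y\<in>scc_of A At a. (x, y) \<in> At\<^sup>*"
    using scc_of_in_SCCS[OF \<open>a \<in> A\<close>, of At] unfolding SCCS_iff by blast+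
  ultimately have "scc_of A At a = S"
    by (intro maximal)
  then show ?thesis ..
qed

lemma SCCS_subset: "S \<in> SCCS A At \<Longrightarrow> S \<subseteq> A"
  unfolding SCCS_iff by blast

lemma SCCS_nonempty: "S \<in> SCCS A At \<Longrightarrow> S \<noteq> {}"
  unfolding SCCS_iff by blast

lemma SCCS_disjoint: "S \<in> SCCS A At \<Longrightarrow> T \<in> SCCS A At \<Longrightarrow> x \<in> S \<Longrightarrow> x \<in> T \<Longrightarrow> S = T"
  using SCCS_eq_scc_of by metis

lemma SCCS_card_1:
  assumes "card (SCCS A At) = 1"
  shows "SCCS A At = {A}"
proof -
  obtain S where S: "SCCS A At = {S}"
    using assms card_1_singletonE by blast
  have "a \<in> S" if "a \<in> A" for a
  proof -
    have "scc_of A At a = S"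
      using scc_of_in_SCCS[OF that, of At] S by blast
    then show "a \<in> S"
      using scc_of_self[OF that, of At] by simp
  qed
  moreover have "S \<subseteq> A"
    using S SCCS_subset[of S A At] by blast
  ultimately show ?thesis
    using S by blast
qed

lemma SCCS_psubset:
  assumes "card (SCCS A At) \<noteq> 1" "S \<in> SCCS A At"
  shows "S \<subset> A"
proof -
  have "SCCS A At \<noteq> {S}"
    using assms(1) by auto
  then obtain T where T: "T \<in> SCCS A At" "T \<noteq> S"
    using assms(2) by blast
  then obtain y where "y \<in> T" "y \<notin> S"
    using SCCS_nonempty SCCS_disjoint[OF assms(2)] by blast
  then show ?thesis
    using T(1) assms(2) SCCS_subset by blast
qed

lemma scc_of_acyclic:
  assumes "a \<in> A" "(a, a) \<notin> At\<^sup>+"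
  shows "scc_of A At a = {a}"
proof -
  have "b = a" if "(a, b) \<in> At\<^sup>*" "(b, a) \<in> At\<^sup>*" for b
    using that assms(2) by (metis rtrancl_eq_or_trancl trancl_rtrancl_trancl)
  then show ?thesis
    using assms(1) unfolding scc_of_def by auto
qed

(* The fuel used by cf2_ext and stage2_ext; by scc_rec_fuel any fuel above card A is equivalent. *)
abbreviation scc_ext ::
  "('a set \<Rightarrow> ('a \<times> 'a) set \<Rightarrow> 'a set \<Rightarrow> bool) \<Rightarrow> 'a set \<Rightarrow> ('a \<times> 'a) set \<Rightarrow> 'a set \<Rightarrow> bool" where
  "scc_ext base A At \<equiv> scc_rec base (Suc (card A)) A At"

lemma SCCS_empty: "SCCS {} At = {}"
  using SCCS_subset SCCS_nonempty by blast

lemma SCCS_singleton: "SCCS {x} At = {{x}}"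
proof -
  have "scc_of {x} At x = {x}"
    unfolding scc_of_def by auto
  then have "{x} \<in> SCCS {x} At"
    using scc_of_in_SCCS[of x "{x}" At] by simp
  moreover have "S = {x}" if "S \<in> SCCS {x} At" for S
    using SCCS_subset[OF that] SCCS_nonempty[OF that] by blast
  ultimately show ?thesis by blast
qed

lemma UP_set_subset: "UP_set A At S E \<subseteq> S"
  unfolding UP_set_def by blast

lemma UP_set_whole: "UP_set A At A E = A"
  unfolding UP_set_def D_set_def S_out_minus_def by blast

lemma UP_set_Un_inside: "F \<subseteq> S \<Longrightarrow> UP_set A At S (E \<union> F) = UP_set A At S E"
  unfolding UP_set_def D_set_def S_out_minus_def by blast

lemma restr_whole: "At \<subseteq> A \<times> A \<Longrightarrow> restr At A = At"
  unfolding restr_def by blast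

lemma restr_restr: "U \<subseteq> B \<Longrightarrow> restr (restr At B) U = restr At U"
  unfolding restr_def by blast

lemma scc_rec_subset: "scc_rec base n A At E \<Longrightarrow> E \<subseteq> A"
  by (cases n) auto

lemma scc_rec_empty: "scc_rec base (Suc n) {} At {}"
  by (simp add: SCCS_empty)

lemma card_UP_set_less:
  assumes "finite A" "card (SCCS A At) \<noteq> 1" "S \<in> SCCS A At"
  shows "card (UP_set A At S E) < card A"
proof -
  have "UP_set A At S E \<subset> A"
    using UP_set_subset SCCS_psubset[OF assms(2,3)] by (rule subset_psubset_trans)
  then show ?thesis
    using assms(1) by (rule psubset_card_mono[rotated])
qed

lemma scc_rec_fuel:
  "finite A \<Longrightarrow> card A < n \<Longrightarrow> card A < m \<Longrightarrow> scc_rec base n A At E = scc_rec base m A At E"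
proof (induction n arbitrary: m A At E)
  case 0
  then show ?case by simp
next
  case (Suc n)
  obtain m' where m: "m = Suc m'"
    using Suc.prems(3) by (cases m) auto
  have IH: "scc_rec base n (UP_set A At S E) (restr At (UP_set A At S E)) (E \<inter> S) =
      scc_rec base m' (UP_set A At S E) (restr At (UP_set A At S E)) (E \<inter> S)"
    if "card (SCCS A At) \<noteq> 1" "S \<in> SCCS A At" for S
  proof (rule Suc.IH)
    show "finite (UP_set A At S E)"
      using Suc.prems(1) SCCS_subset[OF that(2)] UP_set_subset finite_subset by metis
    show "card (UP_set A At S E) < n" "card (UP_set A At S E) < m'"
      using card_UP_set_less[OF Suc.prems(1) that, of E] Suc.prems(2,3) m by simp_all
  qed
  show ?case
    unfolding m by (cases "card (SCCS A At) = 1") (simp_all add: IH cong: ball_cong)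
qed

lemma scc_ext_iff_SCCS:
  assumes "finite A" "card (SCCS A At) \<noteq> 1"
  shows "scc_ext base A At E \<longleftrightarrow> E \<subseteq> A \<and>
    (\<forall>S\<in>SCCS A At. scc_ext base (UP_set A At S E) (restr At (UP_set A At S E)) (E \<inter> S))"
proof -
  have "scc_rec base (card A) (UP_set A At S E) (restr At (UP_set A At S E)) (E \<inter> S) =
      scc_ext base (UP_set A At S E) (restr At (UP_set A At S E)) (E \<inter> S)"
    if "S \<in> SCCS A At" for S
  proof (rule scc_rec_fuel)
    show "finite (UP_set A At S E)"
      using assms(1) SCCS_subset[OF that] UP_set_subset finite_subset by metis
    show "card (UP_set A At S E) < card A"
      using card_UP_set_less[OF assms that] .
  qed simp
  then show ?thesis
    using assms(2) by (simp cong: ball_cong)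
qed

lemma scc_ext_SCC:
  assumes "finite A" "At \<subseteq> A \<times> A" "scc_ext base A At E" "S \<in> SCCS A At"
  shows "scc_ext base (UP_set A At S E) (restr At (UP_set A At S E)) (E \<inter> S)"
proof (cases "card (SCCS A At) = 1")
  case True
  then have "S = A"
    using assms(4) SCCS_card_1 by blast
  moreover have "E \<subseteq> A"
    using assms(3) by (rule scc_rec_subset)
  ultimately show ?thesis
    using assms(3) by (simp add: UP_set_whole restr_whole[OF assms(2)] Int_absorb2)
next
  case False
  then show ?thesis
    using assms(3,4) scc_ext_iff_SCCS[OF assms(1)] by blast
qed

lemma UP_set_singleton:
  assumes "At \<subseteq> A \<times> A" "(x, x) \<notin> At"
  shows "UP_set A At {x} E = (if \<exists>e\<in>E. (e, x) \<in> At then {} else {x})"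
  using assms unfolding UP_set_def D_set_def S_out_minus_def by auto

lemma scc_ext_grounded_on:
  assumes "finite A" "At \<subseteq> A \<times> A" "V \<subseteq> A" and acyclic: "\<And>x. x \<in> V \<Longrightarrow> (x, x) \<notin> At\<^sup>+"
    and base_singleton: "\<And>x F. base {x} {} F \<Longrightarrow> F = {x}"
    and E: "scc_ext base A At E"
  shows "grounded_on At V E"
  unfolding grounded_on_def
proof
  fix x assume "x \<in> V"
  then have "x \<in> A" "(x, x) \<notin> At"
    using assms(3) acyclic by auto
  have "{x} \<in> SCCS A At"
    using scc_of_in_SCCS[OF \<open>x \<in> A\<close>, of At] scc_of_acyclic[OF \<open>x \<in> A\<close>] acyclic[OF \<open>x \<in> V\<close>]
    by simp
  from scc_ext_SCC[OF assms(1,2) E this]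
  have x: "scc_ext base (UP_set A At {x} E) (restr At (UP_set A At {x} E)) (E \<inter> {x})" .
  show "x \<in> E \<longleftrightarrow> \<not> (\<exists>y\<in>E. (y, x) \<in> At)"
  proof (cases "\<exists>y\<in>E. (y, x) \<in> At")
    case True
    then have "E \<inter> {x} \<subseteq> {}"
      using scc_rec_subset[OF x] UP_set_singleton[OF assms(2) \<open>(x, x) \<notin> At\<close>] by simp
    then show ?thesis
      using True by blast
  next
    case False
    moreover have "restr At {x} = {}"
      using \<open>(x, x) \<notin> At\<close> unfolding restr_def by blast
    ultimately have "base {x} {} (E \<inter> {x})"
      using x UP_set_singleton[OF assms(2) \<open>(x, x) \<notin> At\<close>] by (simp add: SCCS_singleton)
    then have "E \<inter> {x} = {x}"
      by (rule base_singleton)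
    then show ?thesis
      using False by blast
  qed
qed

lemma sink_SCC_exists:
  assumes "finite A" "A \<noteq> {}" "At \<subseteq> A \<times> A"
  obtains S where "S \<in> SCCS A At" "At `` S \<subseteq> S"
proof -
  define reach where "reach a = {y. (a, y) \<in> At\<^sup>*}" for a
  have reach_subset: "reach a \<subseteq> A" if "a \<in> A" for a
    using that assms(3) unfolding reach_def by (auto elim: rtranclE)
  obtain a where "a \<in> A" and a_min: "\<And>b. b \<in> A \<Longrightarrow> card (reach a) \<le> card (reach b)"
    using ex_has_least_nat[of "\<lambda>a. a \<in> A" _ "\<lambda>a. card (reach a)"] assms(2) by blast
  have "y \<in> scc_of A At a" if "x \<in> scc_of A At a" "(x, y) \<in> At" for x y
  proof -
    have "(a, y) \<in> At\<^sup>*"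
      using that unfolding scc_of_def by (auto intro: rtrancl_into_rtrancl)
    then have "y \<in> A" "reach y \<subseteq> reach a"
      using reach_subset[OF \<open>a \<in> A\<close>] unfolding reach_def by (auto intro: rtrancl_trans)
    moreover have "(y, a) \<in> At\<^sup>*"
    proof (rule ccontr)
      assume "(y, a) \<notin> At\<^sup>*"
      then have "reach y \<subset> reach a"
        using \<open>reach y \<subseteq> reach a\<close> unfolding reach_def by blast
      then have "card (reach y) < card (reach a)"
        using finite_subset[OF reach_subset[OF \<open>a \<in> A\<close>] assms(1)]
        by (rule psubset_card_mono[rotated])
      then show False
        using a_min[OF \<open>y \<in> A\<close>] by simp
    qed
    ultimately show ?thesis
      using \<open>(a, y) \<in> At\<^sup>*\<close> unfolding scc_of_def by blast
  qed
  then have "At `` scc_of A At a \<subseteq> scc_of A At a"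
    by blast
  then show thesis
    using that scc_of_in_SCCS[OF \<open>a \<in> A\<close>] by blast
qed

lemma rtrancl_restr_outside_sink:
  assumes "At \<subseteq> A \<times> A" and sink: "At `` Sf \<subseteq> Sf"
    and "(x, z) \<in> At\<^sup>*" "z \<notin> Sf"
  shows "(x, z) \<in> (restr At (A - Sf))\<^sup>*"
  using assms(3,4)
proof (induction rule: rtrancl_induct)
  case base
  then show ?case by simp
next
  case (step y z)
  then have "y \<notin> Sf"
    using sink by blast
  with step assms(1) show ?case
    unfolding restr_def by (blast intro: rtrancl_into_rtrancl)
qed

lemma SCCS_Diff_sink:
  assumes "At \<subseteq> A \<times> A" and sink: "At `` Sf \<subseteq> Sf"
    and "Sf \<in> SCCS A At" "S \<in> SCCS A At" "S \<noteq> Sf"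
  shows "S \<in> SCCS (A - Sf) (restr At (A - Sf))"
proof -
  have disjoint: "S \<inter> Sf = {}"
    using SCCS_disjoint[OF assms(3,4)] assms(5) by blast
  have S: "S \<subseteq> A" "S \<noteq> {}" "\<forall>a\<in>S. \<forall>b\<in>S. (a, b) \<in> At\<^sup>*"
    and maximal: "\<And>T. T \<subseteq> A \<Longrightarrow> S \<subseteq> T \<Longrightarrow> \<forall>a\<in>T. \<forall>b\<in>T. (a, b) \<in> At\<^sup>* \<Longrightarrow> T = S"
    using assms(4) unfolding SCCS_iff by blast+
  have "\<forall>a\<in>S. \<forall>b\<in>S. (a, b) \<in> (restr At (A - Sf))\<^sup>*"
    using S(3) disjoint rtrancl_restr_outside_sink[OF assms(1) sink] by blast
  moreover have "T = S"
    if "T \<subseteq> A - Sf" "S \<subseteq> T" "\<forall>a\<in>T. \<forall>b\<in>T. (a, b) \<in> (restr At (A - Sf))\<^sup>*" for T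
  proof (rule maximal)
    have "restr At (A - Sf) \<subseteq> At"
      unfolding restr_def by blast
    then show "\<forall>a\<in>T. \<forall>b\<in>T. (a, b) \<in> At\<^sup>*"
      using that(3) rtrancl_mono by blast
  qed (use that in blast)+
  ultimately show ?thesis
    using S(1,2) disjoint unfolding SCCS_iff by blast
qed

lemma UP_set_Diff_sink:
  assumes sink: "At `` Sf \<subseteq> Sf" and "S \<subseteq> A - Sf" "F \<subseteq> Sf"
  shows "UP_set A At S (E \<union> F) = UP_set (A - Sf) (restr At (A - Sf)) S E"
proof -
  have outside: "e \<notin> Sf" if "(e, a) \<in> At" "a \<in> S" for e a
    using sink that assms(2) by blast
  have "D_set A At S (E \<union> F) = D_set (A - Sf) (restr At (A - Sf)) S E"
    unfolding D_set_def S_out_minus_def restr_def using assms(2,3)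
    by (auto dest: outside) (blast dest: outside)
  then show ?thesis
    unfolding UP_set_def by simp
qed

lemma restr_subset: "restr At U \<subseteq> U \<times> U"
  unfolding restr_def by blast

(* A sink SCC Sf attacks nothing outside itself, so the rest does not depend on it: an extension
   of the rest completes to one of the whole framework by an extension of what it leaves of Sf. *)
lemma scc_ext_Un_sink:
  assumes "finite A" "At \<subseteq> A \<times> A" "card (SCCS A At) \<noteq> 1"
    and Sf: "Sf \<in> SCCS A At" "At `` Sf \<subseteq> Sf"
    and E0: "scc_ext base (A - Sf) (restr At (A - Sf)) E0"
    and F: "scc_ext base (UP_set A At Sf E0) (restr At (UP_set A At Sf E0)) F"
  shows "scc_ext base A At (E0 \<union> F)"
  unfolding scc_ext_iff_SCCS[OF assms(1,3)]
proof (intro conjI ballI)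
  have "F \<subseteq> Sf"
    using scc_rec_subset[OF F] UP_set_subset[of A At Sf E0] by blast
  moreover have "E0 \<subseteq> A - Sf"
    using E0 by (rule scc_rec_subset)
  ultimately show "E0 \<union> F \<subseteq> A"
    using SCCS_subset[OF Sf(1)] by blast
  fix S assume S: "S \<in> SCCS A At"
  show "scc_ext base (UP_set A At S (E0 \<union> F)) (restr At (UP_set A At S (E0 \<union> F))) ((E0 \<union> F) \<inter> S)"
  proof (cases "S = Sf")
    case True
    then have "UP_set A At S (E0 \<union> F) = UP_set A At Sf E0" "(E0 \<union> F) \<inter> S = F"
      using UP_set_Un_inside[OF \<open>F \<subseteq> Sf\<close>] \<open>F \<subseteq> Sf\<close> \<open>E0 \<subseteq> A - Sf\<close> by auto
    with F show ?thesis by simp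
  next
    case False
    then have S0: "S \<in> SCCS (A - Sf) (restr At (A - Sf))"
      by (rule SCCS_Diff_sink[OF assms(2) Sf(2,1) S])
    then have "S \<subseteq> A - Sf"
      by (rule SCCS_subset)
    let ?U0 = "UP_set (A - Sf) (restr At (A - Sf)) S E0"
    have "UP_set A At S (E0 \<union> F) = ?U0"
      using UP_set_Diff_sink[OF Sf(2) \<open>S \<subseteq> A - Sf\<close> \<open>F \<subseteq> Sf\<close>] .
    moreover have "(E0 \<union> F) \<inter> S = E0 \<inter> S"
      using \<open>F \<subseteq> Sf\<close> \<open>S \<subseteq> A - Sf\<close> by blast
    moreover have "restr At ?U0 = restr (restr At (A - Sf)) ?U0"
      using restr_restr UP_set_subset \<open>S \<subseteq> A - Sf\<close> by (metis order_trans)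
    moreover have "finite (A - Sf)"
      using \<open>finite A\<close> by simp
    ultimately show ?thesis
      using scc_ext_SCC[OF _ restr_subset E0 S0] by simp
  qed
qed

lemma scc_ext_exists:
  assumes base_exists: "\<And>A At. finite A \<Longrightarrow> \<exists>E\<subseteq>A. base A At E"
  shows "finite A \<Longrightarrow> At \<subseteq> A \<times> A \<Longrightarrow> \<exists>E. scc_ext base A At E"
proof (induction "card A" arbitrary: A At rule: less_induct)
  case less
  consider "card (SCCS A At) = 1" | "A = {}" | "card (SCCS A At) \<noteq> 1" "A \<noteq> {}"
    by blast
  then show ?case
  proof cases
    case 1
    then show ?thesis
      using base_exists[OF less.prems(1), of At] by auto
  next
    case 2
    then show ?thesis
      using scc_rec_empty by fastforce
  next
    case 3
    obtain Sf where Sf: "Sf \<in> SCCS A At" "At `` Sf \<subseteq> Sf"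
      using sink_SCC_exists[OF less.prems(1) 3(2) less.prems(2)] by blast
    have "A - Sf \<subset> A"
      using SCCS_subset[OF Sf(1)] SCCS_nonempty[OF Sf(1)] by blast
    then have "card (A - Sf) < card A" "finite (A - Sf)"
      using less.prems(1) by (auto intro: psubset_card_mono)
    then obtain E0 where E0: "scc_ext base (A - Sf) (restr At (A - Sf)) E0"
      using less.hyps restr_subset by blast
    let ?U = "UP_set A At Sf E0"
    have "card ?U < card A"
      using card_UP_set_less[OF less.prems(1) 3(1) Sf(1)] .
    moreover have "finite ?U"
      using less.prems(1) SCCS_subset[OF Sf(1)] UP_set_subset[of A At Sf E0] finite_subset by metis
    ultimately obtain F where "scc_ext base ?U (restr At ?U) F"
      using less.hyps restr_subset by blast
    then have "scc_ext base A At (E0 \<union> F)"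
      by (rule scc_ext_Un_sink[OF less.prems 3(1) Sf E0])
    then show ?thesis ..
  qed
qed

section \<open>Rational man's expansions\<close>

lemma psubset_Un_disjoint: "X \<inter> N = {} \<Longrightarrow> Y \<inter> N = {} \<Longrightarrow> X \<union> N \<subset> Y \<union> N \<longleftrightarrow> X \<subset> Y"
proof -
  assume "X \<inter> N = {}" "Y \<inter> N = {}"
  then have "X \<union> N - N = X" "Y \<union> N - N = Y"
    by auto
  then have "X \<union> N = Y \<union> N \<longleftrightarrow> X = Y"
    by metis
  moreover have "X \<union> N \<subseteq> Y \<union> N \<longleftrightarrow> X \<subseteq> Y"
    using \<open>X \<inter> N = {}\<close> by blast
  ultimately show ?thesis
    unfolding psubset_eq by blast
qed

locale rational_expansion =
  fixes AR :: "'a set" and Att :: "('a \<times> 'a) set" and AR' :: "'a set" and Att' :: "('a \<times> 'a) set"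
  assumes wf_AF: "wf_AF AR Att" and wf_AF': "wf_AF AR' Att'"
    and rm_expansion: "rm_expansion AR Att AR' Att'"
begin

lemma finite_AR: "finite AR" and Att_subset: "Att \<subseteq> AR \<times> AR"
  and finite_AR': "finite AR'" and Att'_subset: "Att' \<subseteq> AR' \<times> AR'"
  using wf_AF wf_AF' unfolding wf_AF_def by auto

lemma AR_subset: "AR \<subseteq> AR'" and Att_subset_Att': "Att \<subseteq> Att'"
  and cycles_eq: "cycles Att' = cycles Att"
  using rm_expansion unfolding rm_expansion_def normal_expansion_def by auto

lemma reaching_new_not_on_cycle:
  "a \<in> AR \<Longrightarrow> b \<in> AR' - AR \<Longrightarrow> (a, b) \<in> Att'\<^sup>* \<Longrightarrow> xs \<in> cycles Att' \<Longrightarrow> a \<notin> set xs"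
  using rm_expansion unfolding rm_expansion_def reachable_iff_rtrancl by blast

lemma Att'_old_iff: "a \<in> AR \<Longrightarrow> b \<in> AR \<Longrightarrow> (a, b) \<in> Att' \<longleftrightarrow> (a, b) \<in> Att"
  using rm_expansion Att_subset_Att' unfolding rm_expansion_def normal_expansion_def by blast

definition upstream :: "'a set" where
  "upstream = {x \<in> AR'. \<exists>b \<in> AR' - AR. (x, b) \<in> Att'\<^sup>*}"

lemma new_subset_upstream: "AR' - AR \<subseteq> upstream"
  unfolding upstream_def by blast

lemma upstream_subset: "upstream \<subseteq> AR'"
  unfolding upstream_def by blast

lemma attacker_in_upstream: "x \<in> upstream \<Longrightarrow> (y, x) \<in> Att' \<Longrightarrow> y \<in> upstream"
  using Att'_subset unfolding upstream_def by (blast intro: converse_rtrancl_into_rtrancl)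

lemma upstream_acyclic:
  assumes "x \<in> upstream"
  shows "(x, x) \<notin> Att'\<^sup>+"
proof
  assume "(x, x) \<in> Att'\<^sup>+"
  then obtain xs where "attack_cycle Att' xs" "x \<in> set xs"
    by (rule trancl_imp_attack_cycle)
  then have "xs \<in> cycles Att" "xs \<in> cycles Att'"
    using cycles_eq unfolding cycles_def by auto
  then have "x \<in> AR"
    using attack_cycle_subset_Domain \<open>x \<in> set xs\<close> Att_subset unfolding cycles_def by blast
  moreover obtain b where "b \<in> AR' - AR" "(x, b) \<in> Att'\<^sup>*"
    using assms unfolding upstream_def by blast
  ultimately show False
    using reaching_new_not_on_cycle \<open>xs \<in> cycles Att'\<close> \<open>x \<in> set xs\<close> by blast
qed

lemma old_upstream_acyclic: "x \<in> upstream \<inter> AR \<Longrightarrow> (x, x) \<notin> Att\<^sup>+"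
  using upstream_acyclic trancl_mono[OF _ Att_subset_Att'] by blast

lemma finite_Att': "finite Att'"
  using finite_subset[OF Att'_subset] finite_AR' by blast

lemma upstream_wf_attacker_closed: "wf_attacker_closed Att' upstream"
  using finite_Att' attacker_in_upstream upstream_acyclic by (rule wf_attacker_closedI)

lemma old_upstream_wf_attacker_closed: "wf_attacker_closed Att (upstream \<inter> AR)"
proof (rule wf_attacker_closedI)
  show "finite Att"
    using finite_subset[OF Att_subset] finite_AR by blast
  show "y \<in> upstream \<inter> AR" if "x \<in> upstream \<inter> AR" "(y, x) \<in> Att" for x y
    using that attacker_in_upstream Att_subset Att_subset_Att' by blast
qed (rule old_upstream_acyclic)

lemma complete_ext_grounded_on_upstream: "complete_ext AR' Att' S \<Longrightarrow> grounded_on Att' upstream S"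
  using upstream_wf_attacker_closed upstream_subset by (rule complete_ext_grounded_on)

lemma new_argument_in_all:
  assumes G: "complete_ext AR' Att' G" "\<not> G \<subseteq> AR" and S: "grounded_on Att' upstream S"
  shows "\<not> S \<subseteq> AR"
proof -
  obtain x where "x \<in> G" "x \<notin> AR"
    using G(2) by blast
  moreover have "G \<subseteq> AR'"
    using G(1) unfolding complete_ext_def admissible_def by blast
  ultimately have "x \<in> upstream"
    using new_subset_upstream by blast
  then have "x \<in> S"
    using grounded_on_unique[OF upstream_wf_attacker_closed
        complete_ext_grounded_on_upstream[OF G(1)] S] \<open>x \<in> G\<close> by blast
  then show ?thesis
    using \<open>x \<notin> AR\<close> by blast
qed

definition attacks_new :: "'a set \<Rightarrow> bool" where
  "attacks_new S \<longleftrightarrow> (\<forall>b \<in> AR' - AR. \<exists>s \<in> S. (s, b) \<in> Att')"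

lemma acceptable_expansion_iff:
  assumes "S \<subseteq> AR" "attacks_new S" "a \<in> AR"
  shows "acceptable Att' a S \<longleftrightarrow> acceptable Att a S"
proof
  assume acc: "acceptable Att' a S"
  show "acceptable Att a S"
    unfolding acceptable_def
  proof (intro allI impI)
    fix c assume "(c, a) \<in> Att"
    then have "c \<in> AR" "(c, a) \<in> Att'"
      using Att_subset Att_subset_Att' by auto
    then obtain d where "d \<in> S" "(d, c) \<in> Att'"
      using acc unfolding acceptable_def by blast
    then show "\<exists>d\<in>S. (d, c) \<in> Att"
      using Att'_old_iff \<open>c \<in> AR\<close> assms(1) by blast
  qed
next
  assume acc: "acceptable Att a S"
  show "acceptable Att' a S"
    unfolding acceptable_def
  proof (intro allI impI)
    fix c assume "(c, a) \<in> Att'"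
    show "\<exists>d\<in>S. (d, c) \<in> Att'"
    proof (cases "c \<in> AR")
      case True
      then have "(c, a) \<in> Att"
        using Att'_old_iff \<open>(c, a) \<in> Att'\<close> assms(3) by blast
      then show ?thesis
        using acc Att_subset_Att' unfolding acceptable_def by blast
    next
      case False
      then show ?thesis
        using assms(2) \<open>(c, a) \<in> Att'\<close> Att'_subset unfolding attacks_new_def by blast
    qed
  qed
qed

lemma complete_ext_expansion_iff:
  assumes "S \<subseteq> AR" "attacks_new S"
  shows "complete_ext AR' Att' S \<longleftrightarrow> complete_ext AR Att S"
proof -
  have cf: "conflict_free Att' S \<longleftrightarrow> conflict_free Att S"
    using assms(1) Att'_old_iff unfolding conflict_free_def by blast
  have "\<not> acceptable Att' b S" if "conflict_free Att' S" "b \<in> AR' - AR" for b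
    using that assms(2) unfolding attacks_new_def acceptable_def conflict_free_def by blast
  then have "(\<forall>a\<in>AR'. acceptable Att' a S \<longrightarrow> a \<in> S) \<longleftrightarrow> (\<forall>a\<in>AR. acceptable Att a S \<longrightarrow> a \<in> S)"
    if "conflict_free Att' S"
    using that acceptable_expansion_iff[OF assms] AR_subset by blast
  moreover have "(\<forall>a\<in>S. acceptable Att' a S) \<longleftrightarrow> (\<forall>a\<in>S. acceptable Att a S)"
    using acceptable_expansion_iff[OF assms] assms(1) by blast
  ultimately show ?thesis
    using cf assms(1) AR_subset unfolding complete_ext_def admissible_def by blast
qed

lemma complete_ext_grounded_on_old_upstream:
  "complete_ext AR Att S \<Longrightarrow> grounded_on Att (upstream \<inter> AR) S"
  by (rule complete_ext_grounded_on[OF old_upstream_wf_attacker_closed Int_lower2])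

lemma grounded_on_old_upstream_attacks_new:
  assumes G: "complete_ext AR' Att' G" "G \<subseteq> AR" and S: "grounded_on Att (upstream \<inter> AR) S"
  shows "attacks_new S"
  unfolding attacks_new_def
proof
  fix b assume b: "b \<in> AR' - AR"
  have G_grounded': "grounded_on Att' upstream G"
    using complete_ext_grounded_on_upstream[OF G(1)] .
  have G_attacks: "attacks_new G"
    unfolding attacks_new_def
  proof
    fix b assume "b \<in> AR' - AR"
    then have "b \<in> upstream" "b \<notin> G"
      using new_subset_upstream G(2) by blast+
    then show "\<exists>g\<in>G. (g, b) \<in> Att'"
      using G_grounded' unfolding grounded_on_def by blast
  qed
  then have "complete_ext AR Att G"
    using complete_ext_expansion_iff[OF G(2)] G(1) by blast
  then have G_grounded: "grounded_on Att (upstream \<inter> AR) G"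
    by (rule complete_ext_grounded_on_old_upstream)
  obtain g where "g \<in> G" "(g, b) \<in> Att'"
    using G_attacks b unfolding attacks_new_def by blast
  moreover have "g \<in> upstream \<inter> AR"
    using attacker_in_upstream new_subset_upstream b \<open>(g, b) \<in> Att'\<close> \<open>g \<in> G\<close> G(2) by blast
  ultimately have "g \<in> S"
    using grounded_on_unique[OF old_upstream_wf_attacker_closed G_grounded S] by blast
  then show "\<exists>s\<in>S. (s, b) \<in> Att'"
    using \<open>(g, b) \<in> Att'\<close> by blast
qed

lemma complete_ext_attacks_new:
  assumes "complete_ext AR' Att' G" "G \<subseteq> AR" "complete_ext AR Att S"
  shows "attacks_new S"
  using assms(1,2) complete_ext_grounded_on_old_upstream[OF assms(3)]
  by (rule grounded_on_old_upstream_attacks_new)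

lemma complete_ext_expansion_eq:
  assumes G: "complete_ext AR' Att' G" "G \<subseteq> AR"
  shows "complete_ext AR' Att' = complete_ext AR Att"
proof (intro ext iffI)
  fix S assume S: "complete_ext AR' Att' S"
  have S_grounded: "grounded_on Att' upstream S"
    using complete_ext_grounded_on_upstream[OF S] .
  have "b \<notin> S" if "b \<in> AR' - AR" for b
    using grounded_on_unique[OF upstream_wf_attacker_closed
        complete_ext_grounded_on_upstream[OF G(1)] S_grounded] new_subset_upstream that G(2) by blast
  moreover have "S \<subseteq> AR'"
    using S unfolding complete_ext_def admissible_def by blast
  ultimately have "S \<subseteq> AR"
    by blast
  moreover have "attacks_new S"
    using S_grounded new_subset_upstream \<open>S \<subseteq> AR\<close>
    unfolding attacks_new_def grounded_on_def by blast
  ultimately show "complete_ext AR Att S"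
    using complete_ext_expansion_iff S by blast
next
  fix S assume S: "complete_ext AR Att S"
  then have "attacks_new S"
    by (rule complete_ext_attacks_new[OF G])
  moreover have "S \<subseteq> AR"
    using S unfolding complete_ext_def admissible_def by blast
  ultimately show "complete_ext AR' Att' S"
    using complete_ext_expansion_iff S by blast
qed

lemma range_expansion:
  assumes "S \<subseteq> AR" "attacks_new S"
  shows "S \<union> plus Att' S = S \<union> plus Att S \<union> (AR' - AR)"
  using assms Att'_subset Att_subset_Att' Att'_old_iff unfolding plus_def attacks_new_def by blast

lemma semi_stable_ext_expansion_eq:
  assumes G: "complete_ext AR' Att' G" "G \<subseteq> AR"
  shows "semi_stable_ext AR' Att' = semi_stable_ext AR Att"
proof -
  have range: "S \<union> plus Att' S = S \<union> plus Att S \<union> (AR' - AR)"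
    "(S \<union> plus Att S) \<inter> (AR' - AR) = {}"
    if "complete_ext AR Att S" for S
  proof -
    have "S \<subseteq> AR"
      using that unfolding complete_ext_def admissible_def by blast
    then show "S \<union> plus Att' S = S \<union> plus Att S \<union> (AR' - AR)"
      using range_expansion complete_ext_attacks_new[OF G that] by blast
    show "(S \<union> plus Att S) \<inter> (AR' - AR) = {}"
      using \<open>S \<subseteq> AR\<close> Att_subset unfolding plus_def by blast
  qed
  have range_psubset_iff:
    "S \<union> plus Att' S \<subset> T \<union> plus Att' T \<longleftrightarrow> S \<union> plus Att S \<subset> T \<union> plus Att T"
    if "complete_ext AR Att S" "complete_ext AR Att T" for S T
    unfolding range(1)[OF that(1)] range(1)[OF that(2)]
    using range(2)[OF that(1)] range(2)[OF that(2)] by (rule psubset_Un_disjoint)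
  show ?thesis
  proof (intro ext)
    fix S
    show "semi_stable_ext AR' Att' S = semi_stable_ext AR Att S"
      unfolding semi_stable_ext_def complete_ext_expansion_eq[OF G]
      by (simp add: range_psubset_iff cong: conj_cong imp_cong)
  qed
qed

lemma preferred_ext_expansion_eq:
  assumes "complete_ext AR' Att' G" "G \<subseteq> AR"
  shows "preferred_ext AR' Att' = preferred_ext AR Att"
  by (simp add: preferred_ext_eq_max_complete finite_AR finite_AR' max_complete_def[abs_def]
      complete_ext_expansion_eq[OF assms])

lemma grounded_ext_expansion_eq:
  assumes "complete_ext AR' Att' G" "G \<subseteq> AR"
  shows "grounded_ext AR' Att' = grounded_ext AR Att"
  by (simp add: grounded_ext_def[abs_def] complete_ext_expansion_eq[OF assms])

lemma ideal_ext_expansion_eq: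
  assumes "complete_ext AR' Att' G" "G \<subseteq> AR"
  shows "ideal_ext AR' Att' = ideal_ext AR Att"
  by (simp add: ideal_ext_eq_max_complete finite_AR finite_AR' max_complete_def[abs_def]
      complete_ext_expansion_eq[OF assms] preferred_ext_expansion_eq[OF assms])

lemma eager_ext_expansion_eq:
  assumes "complete_ext AR' Att' G" "G \<subseteq> AR"
  shows "eager_ext AR' Att' = eager_ext AR Att"
  by (simp add: eager_ext_eq_max_complete finite_AR finite_AR' max_complete_def[abs_def]
      complete_ext_expansion_eq[OF assms] semi_stable_ext_expansion_eq[OF assms])

definition persists :: "('a set \<Rightarrow> bool) \<Rightarrow> ('a set \<Rightarrow> bool) \<Rightarrow> bool" where
  "persists \<sigma> \<sigma>' \<longleftrightarrow> (\<forall>E. \<sigma> E \<longrightarrow> (\<exists>E'. \<sigma>' E' \<and> (\<not> E' \<subseteq> AR \<or> E' = E)))"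

lemma persistsI:
  assumes grounded: "\<And>S. \<sigma>' S \<Longrightarrow> grounded_on Att' upstream S" and exists: "\<exists>S. \<sigma>' S"
    and unchanged: "\<And>G E. complete_ext AR' Att' G \<Longrightarrow> G \<subseteq> AR \<Longrightarrow> \<sigma> E \<Longrightarrow> \<sigma>' E"
  shows "persists \<sigma> \<sigma>'"
  unfolding persists_def
proof (intro allI impI)
  fix E assume "\<sigma> E"
  (* All complete extensions of AF' agree on upstream, which contains the new arguments,
     so a single one decides which case we are in. *)
  obtain G where G: "complete_ext AR' Att' G"
    using complete_ext_exists[OF finite_AR'] ..
  show "\<exists>E'. \<sigma>' E' \<and> (\<not> E' \<subseteq> AR \<or> E' = E)"
  proof (cases "G \<subseteq> AR")
    case True
    then show ?thesis
      using unchanged[OF G True \<open>\<sigma> E\<close>] by blast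
  next
    case False
    obtain S where "\<sigma>' S"
      using exists ..
    moreover from this have "\<not> S \<subseteq> AR"
      using new_argument_in_all[OF G False grounded] by blast
    ultimately show ?thesis
      by blast
  qed
qed

lemma persistsI_complete:
  assumes "\<And>S. \<sigma>' S \<Longrightarrow> complete_ext AR' Att' S" "\<exists>S. \<sigma>' S"
    and "\<And>G. complete_ext AR' Att' G \<Longrightarrow> G \<subseteq> AR \<Longrightarrow> \<sigma>' = \<sigma>"
  shows "persists \<sigma> \<sigma>'"
proof (rule persistsI)
  show "grounded_on Att' upstream S" if "\<sigma>' S" for S
    using assms(1)[OF that] by (rule complete_ext_grounded_on_upstream)
qed (use assms(2,3) in simp_all)

lemma complete_ext_persists: "persists (complete_ext AR Att) (complete_ext AR' Att')"
  by (rule persistsI_complete[OF _ complete_ext_exists[OF finite_AR'] complete_ext_expansion_eq])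

lemma preferred_ext_persists: "persists (preferred_ext AR Att) (preferred_ext AR' Att')"
  by (rule persistsI_complete[OF preferred_ext_imp_complete_ext
        preferred_ext_exists[OF finite_AR'] preferred_ext_expansion_eq])

lemma grounded_ext_persists: "persists (grounded_ext AR Att) (grounded_ext AR' Att')"
  by (rule persistsI_complete[OF grounded_ext_imp_complete_ext
        grounded_ext_exists[OF finite_AR'] grounded_ext_expansion_eq])

lemma semi_stable_ext_persists: "persists (semi_stable_ext AR Att) (semi_stable_ext AR' Att')"
  by (rule persistsI_complete[OF semi_stable_ext_imp_complete_ext
        semi_stable_ext_exists[OF finite_AR'] semi_stable_ext_expansion_eq])

lemma ideal_ext_persists: "persists (ideal_ext AR Att) (ideal_ext AR' Att')"
  by (rule persistsI_complete[OF ideal_ext_imp_complete_ext[OF finite_AR']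
        ideal_ext_exists[OF finite_AR'] ideal_ext_expansion_eq])

lemma eager_ext_persists: "persists (eager_ext AR Att) (eager_ext AR' Att')"
  by (rule persistsI_complete[OF eager_ext_imp_complete_ext[OF finite_AR']
        eager_ext_exists[OF finite_AR'] eager_ext_expansion_eq])

lemma plus_old: "S \<subseteq> AR \<Longrightarrow> plus Att S = plus Att' S \<inter> AR"
  using Att_subset Att'_old_iff unfolding plus_def by blast

lemma stage_ext_range_maximal_among_old:
  assumes E: "stage_ext AR Att E" and T: "T \<subseteq> AR" "conflict_free Att' T"
    and range_subset: "E \<union> plus Att' E \<subseteq> T \<union> plus Att' T"
  shows "T \<union> plus Att' T \<subseteq> E \<union> plus Att' E"
proof
  have "E \<subseteq> AR" and cf: "conflict_free Att E"
    and E_max: "\<And>T. T \<subseteq> AR \<Longrightarrow> conflict_free Att T \<Longrightarrow> \<not> E \<union> plus Att E \<subset> T \<union> plus Att T"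
    using E unfolding stage_ext_def by blast+
  have cf_T: "conflict_free Att T"
    using T(2) Att_subset_Att' unfolding conflict_free_def by blast
  have "E \<union> plus Att E \<subseteq> T \<union> plus Att T"
    using range_subset plus_old[OF \<open>E \<subseteq> AR\<close>] plus_old[OF T(1)] \<open>E \<subseteq> AR\<close> by blast
  then have range_eq: "E \<union> plus Att E = T \<union> plus Att T"
    using E_max[OF T(1) cf_T] by blast
  have agree: "x \<in> E \<longleftrightarrow> x \<in> T" if "x \<in> upstream \<inter> AR" for x
    using conflict_free_eq_on_if_range_eq_on[OF old_upstream_wf_attacker_closed cf cf_T]
      range_eq that
    by blast
  fix y assume y: "y \<in> T \<union> plus Att' T"
  show "y \<in> E \<union> plus Att' E"
  proof (cases "y \<in> AR")
    case True
    then show ?thesis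
      using y range_eq plus_old[OF \<open>E \<subseteq> AR\<close>] plus_old[OF T(1)] by blast
  next
    case False
    then obtain t where "t \<in> T" "(t, y) \<in> Att'"
      using y T(1) unfolding plus_def by blast
    moreover have "y \<in> AR' - AR"
      using False \<open>(t, y) \<in> Att'\<close> Att'_subset by blast
    ultimately have "t \<in> upstream \<inter> AR"
      using attacker_in_upstream new_subset_upstream T(1) by blast
    then have "t \<in> E"
      using agree \<open>t \<in> T\<close> by blast
    then show ?thesis
      using \<open>(t, y) \<in> Att'\<close> unfolding plus_def by blast
  qed
qed

lemma stage_ext_persists: "persists (stage_ext AR Att) (stage_ext AR' Att')"
  unfolding persists_def
proof (intro allI impI)
  fix E assume E: "stage_ext AR Att E"
  show "\<exists>E'. stage_ext AR' Att' E' \<and> (\<not> E' \<subseteq> AR \<or> E' = E)"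
  proof (cases "stage_ext AR' Att' E")
    case True
    then show ?thesis by blast
  next
    case False
    have "E \<subseteq> AR" "conflict_free Att E"
      using E unfolding stage_ext_def by blast+
    then have "conflict_free Att' E"
      using Att'_old_iff unfolding conflict_free_def by blast
    then obtain T' where "T' \<subseteq> AR'" "conflict_free Att' T'" "E \<union> plus Att' E \<subset> T' \<union> plus Att' T'"
      using False \<open>E \<subseteq> AR\<close> AR_subset unfolding stage_ext_def by blast
    then obtain T where T: "stage_ext AR' Att' T" and "T' \<union> plus Att' T' \<subseteq> T \<union> plus Att' T"
      using stage_ext_exists_above[OF finite_AR'] by blast
    then have range_psubset: "E \<union> plus Att' E \<subset> T \<union> plus Att' T"
      using \<open>E \<union> plus Att' E \<subset> T' \<union> plus Att' T'\<close> by blast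
    have "\<not> T \<subseteq> AR"
    proof
      assume "T \<subseteq> AR"
      moreover have "conflict_free Att' T"
        using T unfolding stage_ext_def by blast
      moreover have "E \<union> plus Att' E \<subseteq> T \<union> plus Att' T"
        using range_psubset by blast
      ultimately have "T \<union> plus Att' T \<subseteq> E \<union> plus Att' E"
        by (rule stage_ext_range_maximal_among_old[OF E])
      with range_psubset show False
        by blast
    qed
    with T show ?thesis
      by blast
  qed
qed

lemma rtrancl_from_outside_upstream:
  assumes "x \<in> AR" "x \<notin> upstream" "(x, z) \<in> Att'\<^sup>*"
  shows "z \<in> AR - upstream \<and> (x, z) \<in> Att\<^sup>*"
  using assms(3)
proof (induction rule: rtrancl_induct)
  case base
  then show ?case
    using assms(1,2) by simp
next
  case (step y z)
  then have "z \<notin> upstream"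
    using attacker_in_upstream by blast
  then have "z \<in> AR"
    using new_subset_upstream step(2) Att'_subset by blast
  then have "(y, z) \<in> Att"
    using Att'_old_iff step by blast
  then show ?case
    using step \<open>z \<in> AR\<close> \<open>z \<notin> upstream\<close> by (blast intro: rtrancl_into_rtrancl)
qed

lemma scc_of_expansion:
  assumes "x \<in> AR"
  shows "scc_of AR' Att' x = scc_of AR Att x"
proof (cases "x \<in> upstream")
  case True
  then have "(x, x) \<notin> Att'\<^sup>+" "(x, x) \<notin> Att\<^sup>+"
    using upstream_acyclic old_upstream_acyclic assms by blast+
  moreover have "x \<in> AR'"
    using assms AR_subset by blast
  ultimately show ?thesis
    using scc_of_acyclic assms by metis
next
  case False
  have "scc_of AR Att x \<subseteq> scc_of AR' Att' x"
    using AR_subset rtrancl_mono[OF Att_subset_Att'] unfolding scc_of_def by blast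
  moreover have "y \<in> scc_of AR Att x" if "y \<in> scc_of AR' Att' x" for y
  proof -
    have "(x, y) \<in> Att'\<^sup>*" "(y, x) \<in> Att'\<^sup>*"
      using that unfolding scc_of_def by blast+
    then have "y \<in> AR - upstream" "(x, y) \<in> Att\<^sup>*"
      using rtrancl_from_outside_upstream[OF assms False] by blast+
    moreover from this have "(y, x) \<in> Att\<^sup>*"
      using rtrancl_from_outside_upstream \<open>(y, x) \<in> Att'\<^sup>*\<close> by blast
    ultimately show ?thesis
      unfolding scc_of_def by blast
  qed
  ultimately show ?thesis
    by blast
qed

lemma scc_of_new:
  assumes "b \<in> AR' - AR"
  shows "scc_of AR' Att' b = {b}"
proof (rule scc_of_acyclic)
  show "b \<in> AR'"
    using assms by blast
  show "(b, b) \<notin> Att'\<^sup>+"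
    using assms new_subset_upstream by (intro upstream_acyclic) blast
qed

lemma SCCS_expansion: "SCCS AR' Att' = SCCS AR Att \<union> (\<lambda>b. {b}) ` (AR' - AR)"
proof (intro equalityI subsetI)
  fix S assume S: "S \<in> SCCS AR' Att'"
  then obtain x where "x \<in> S"
    using SCCS_nonempty by blast
  then have S_eq: "S = scc_of AR' Att' x" and "x \<in> AR'"
    using SCCS_eq_scc_of[OF S] SCCS_subset[OF S] by blast+
  show "S \<in> SCCS AR Att \<union> (\<lambda>b. {b}) ` (AR' - AR)"
  proof (cases "x \<in> AR")
    case True
    then have "S \<in> SCCS AR Att"
      using S_eq scc_of_expansion scc_of_in_SCCS by simp
    then show ?thesis ..
  next
    case False
    then have "S = {x}"
      using S_eq scc_of_new \<open>x \<in> AR'\<close> by simp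
    then show ?thesis
      using False \<open>x \<in> AR'\<close> by blast
  qed
next
  fix S assume "S \<in> SCCS AR Att \<union> (\<lambda>b. {b}) ` (AR' - AR)"
  then obtain x where "x \<in> AR'" "S = scc_of AR' Att' x"
  proof
    assume S: "S \<in> SCCS AR Att"
    then obtain x where "x \<in> S"
      using SCCS_nonempty by blast
    moreover from this have "x \<in> AR"
      using SCCS_subset[OF S] by blast
    ultimately have "S = scc_of AR' Att' x"
      using SCCS_eq_scc_of[OF S] scc_of_expansion by simp
    moreover have "x \<in> AR'"
      using \<open>x \<in> AR\<close> AR_subset by blast
    ultimately show thesis
      using that by blast
  next
    assume "S \<in> (\<lambda>b. {b}) ` (AR' - AR)"
    then obtain b where "b \<in> AR' - AR" "S = {b}"
      by blast
    then show thesis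
      using that scc_of_new by blast
  qed
  then show "S \<in> SCCS AR' Att'"
    using scc_of_in_SCCS by simp
qed

lemma UP_set_expansion: "S \<subseteq> AR \<Longrightarrow> E \<subseteq> AR \<Longrightarrow> UP_set AR' Att' S E = UP_set AR Att S E"
  using Att'_old_iff AR_subset unfolding UP_set_def D_set_def S_out_minus_def by blast

lemma restr_expansion: "U \<subseteq> AR \<Longrightarrow> restr Att' U = restr Att U"
  using Att'_old_iff unfolding restr_def by blast

lemma card_SCCS_expansion:
  assumes "b \<in> AR' - AR" "a \<in> AR"
  shows "card (SCCS AR' Att') \<noteq> 1"
proof
  assume "card (SCCS AR' Att') = 1"
  then have "SCCS AR' Att' = {AR'}"
    by (rule SCCS_card_1)
  moreover have "{b} \<in> SCCS AR' Att'"
    unfolding SCCS_expansion using assms(1) by blast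
  ultimately have "AR' = {b}"
    by simp
  then show False
    using assms AR_subset by blast
qed

lemma scc_ext_attacks_new:
  assumes G: "complete_ext AR' Att' G" "G \<subseteq> AR"
    and base_singleton: "\<And>x F. base {x} {} F \<Longrightarrow> F = {x}"
    and E: "scc_ext base AR Att E"
  shows "attacks_new E"
proof (rule grounded_on_old_upstream_attacks_new[OF G])
  show "grounded_on Att (upstream \<inter> AR) E"
    using finite_AR Att_subset Int_lower2 old_upstream_acyclic base_singleton E
    by (rule scc_ext_grounded_on)
qed

lemma scc_ext_expansion:
  assumes G: "complete_ext AR' Att' G" "G \<subseteq> AR"
    and base_singleton: "\<And>x F. base {x} {} F \<Longrightarrow> F = {x}"
    and E: "scc_ext base AR Att E"
  shows "scc_ext base AR' Att' E"
proof (cases "AR' = AR")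
  case True
  then have "Att' = Att"
    using Att'_subset Att_subset_Att' Att'_old_iff by auto
  with True E show ?thesis by simp
next
  case False
  have "E \<subseteq> AR"
    using E by (rule scc_rec_subset)
  have attacks: "attacks_new E"
    using G base_singleton E by (rule scc_ext_attacks_new)
  obtain b e where "b \<in> AR' - AR" "e \<in> E"
    using False AR_subset attacks unfolding attacks_new_def by blast
  then have "card (SCCS AR' Att') \<noteq> 1"
    using \<open>E \<subseteq> AR\<close> card_SCCS_expansion by blast
  moreover have "scc_ext base (UP_set AR' Att' S E) (restr Att' (UP_set AR' Att' S E)) (E \<inter> S)"
    if S: "S \<in> SCCS AR' Att'" for S
  proof (cases "S \<in> SCCS AR Att")
    case True
    then have "S \<subseteq> AR"
      by (rule SCCS_subset)
    then show ?thesis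
      using scc_ext_SCC[OF finite_AR Att_subset E True] UP_set_expansion[OF _ \<open>E \<subseteq> AR\<close>]
        restr_expansion UP_set_subset by (metis order_trans)
  next
    case False
    then obtain b' where b': "b' \<in> AR' - AR" "S = {b'}"
      using S SCCS_expansion by blast
    then have "UP_set AR' Att' S E = {}"
      using attacks \<open>E \<subseteq> AR\<close> AR_subset
      unfolding attacks_new_def UP_set_def D_set_def S_out_minus_def by blast
    moreover have "E \<inter> S = {}"
      using b' \<open>E \<subseteq> AR\<close> by blast
    ultimately show ?thesis
      by (simp add: SCCS_empty)
  qed
  ultimately show ?thesis
    using \<open>E \<subseteq> AR\<close> AR_subset scc_ext_iff_SCCS[OF finite_AR'] by blast
qed

lemma scc_ext_persists:
  assumes base_singleton: "\<And>x F. base {x} {} F \<Longrightarrow> F = {x}"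
    and base_exists: "\<And>A At. finite A \<Longrightarrow> \<exists>E\<subseteq>A. base A At E"
  shows "persists (scc_ext base AR Att) (scc_ext base AR' Att')"
proof (rule persistsI)
  show "grounded_on Att' upstream S" if "scc_ext base AR' Att' S" for S
    using finite_AR' Att'_subset upstream_subset upstream_acyclic base_singleton that
    by (rule scc_ext_grounded_on)
  show "\<exists>S. scc_ext base AR' Att' S"
    using base_exists finite_AR' Att'_subset by (rule scc_ext_exists)
  show "scc_ext base AR' Att' E" if "complete_ext AR' Att' G" "G \<subseteq> AR" "scc_ext base AR Att E"
    for G E
    using that(1,2) base_singleton that(3) by (rule scc_ext_expansion)
qed

lemma stage2_ext_persists: "persists (stage2_ext AR Att) (stage2_ext AR' Att')"
  unfolding stage2_ext_def[abs_def]
  by (rule scc_ext_persists) (fact stage_ext_singleton, fact stage_ext_exists)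

lemma cf2_ext_persists: "persists (cf2_ext AR Att) (cf2_ext AR' Att')"
  unfolding cf2_ext_def[abs_def]
  by (rule scc_ext_persists) (fact naive_ext_singleton, fact naive_ext_exists)

lemma ext_pred_persists: "persists (ext_pred x AR Att) (ext_pred x AR' Att')"
  by (cases x) (simp_all add: complete_ext_persists preferred_ext_persists semi_stable_ext_persists
      stage_ext_persists stage2_ext_persists cf2_ext_persists grounded_ext_persists
      ideal_ext_persists eager_ext_persists)

end

theorem proposition44:
  fixes x :: semantics
    and AR AR' :: "'a set" and Att Att' :: "('a \<times> 'a) set"
  assumes "wf_AF AR Att" and "wf_AF AR' Att'"
    and "rm_expansion AR Att AR' Att'"
  shows "\<forall>E \<in> sigma x AR Att. \<exists>E' \<in> sigma x AR' Att'. (\<not> E' \<subseteq> AR \<or> E' = E)"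
proof -
  interpret rational_expansion AR Att AR' Att'
    using assms by unfold_locales
  show ?thesis
    using ext_pred_persists[of x] unfolding sigma_def persists_def by blast
qed

end
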